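(* For every long virtual knot diagram $K$ with $m>0$ singular crossings (chords), there exist a regular twist lattice $\Phi_K:\mathbb{Z}^m\to\mathscr{K}$, $\alpha\in(\mathbb{Z}_{\ge 0})^m$ and $\nu\in\{+,-\}^m$ such that $\partial^{\nu\alpha}\Phi_K(\vec 0)=K$ as elements of $\mathbb{Z}[\mathscr{K}]$.
   Context: Long virtual knots: a long virtual knot diagram is a generic immersion $\mathbb{R}\to\mathbb{R}^2$, standard outside a compact set, oriented along the positive $x$-direction, with double points marked classical (over/under), virtual, or singular; $\mathscr{K}$ is the set of equivalence classes of diagrams without singular crossings. A diagram with singular crossings is regarded as an element of $\mathbb{Z}[\mathscr{K}]$ via $K_\times=K_+-K_-$ at each singular crossing. Gauss diagram: $\mathbb{R}$ with, for each classical crossing with preimages $x<y$, an arrow between $x$ and $y$ pointing right if the overcrossing is at $x$, left otherwise, labelled by its writhe sign; singular crossings are drawn as (signed) chords. Discrete derivatives: for $\Phi:\mathbb{Z}^m\to\mathbb{Z}[\mathscr{K}]$, $(\partial_i^+\Phi)(z)=\Phi(z+e_i)-\Phi(z)$, $(\partial_i^-\Phi)(z)=\Phi(z)-\Phi(z-e_i)$; for $a\ge0$, $\partial_i^{a}$ and $\partial_i^{-a}$ are the $a$-fold iterates of $\partial_i^+$ and $\partial_i^-$ (with $\partial_i^0=\mathrm{id}$); for $\alpha\in(\mathbb{Z}_{\ge0})^m$, $\nu\in\{+,-\}^m$, $\partial^{\nu\alpha}=\partial_1^{\nu_1\alpha_1}\cdots\partial_m^{\nu_m\alpha_m}$. Regular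 twist lattices: a proper pair is a pair of disjoint open intervals $A<A'$ of $\mathbb{R}$ such that every arrow or chord with an endpoint in $A\cup A'$ has one endpoint in each. Given $Y\in\{S,B\}$, $Z\in\{L,R\}$, a $p$-configuration in $(A,A')$ consists of $p$ arrows with endpoints $a_1<\dots<a_p$ in $A$, $b_1<\dots<b_p$ in $A'$, arrow $i$ joining $a_i$ to $b_i$ ($Y=S$) or $b_{p+1-i}$ ($Y=B$). A regular twist sequence of type $OYZ$ (resp. $EYZ$) with pair $(A,A')$ assigns to $k\in\mathbb{Z}$ a $p$-configuration with $p=|2k-1|$ (resp. $|2k|$), all arrows signed $+$ if $k\ge1$ and $-$ if $k\le0$, directions alternating with arrow $1$ pointing in direction $Z$ if $k\ge 1$ and opposite to $Z$ if $k\le0$. A regular twist lattice of dimension $m$ is $\Phi:\mathbb{Z}^m\to\mathscr{K}$ given by a fixed diagram $G$ and disjoint proper pairs $(A_i,A_i')$, $1\le i\le m$, free of endpoints of $G$, with $\Phi(k_1,\dots,k_m)$ equal to $G$ plus, in each $(A_i,A_i')$, the $k_i$-th configuration of a regular twist sequence of some type $OYZ$ or $EYZ$. *)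

theory Defs
  imports "HOL-Analysis.Analysis" "HOL-Library.Poly_Mapping"
begin

text \<open>A crossing of a Gauss diagram on the line is a triple (x, y, k) with x < y the
two preimages.  For a classical crossing k = Arrow r s, where r = True iff the arrow
points right (i.e. the overcrossing is at x) and s = True iff the writhe sign is +.
A singular crossing is k = Chord d, where d is the direction (True = right) of the
arrow of its positive resolution; its negative resolution is the arrow of the
opposite direction with sign -.\<close>

datatype kind = Arrow bool bool | Chord bool

type_synonym crossing = "real \<times> real \<times> kind"
type_synonym diagram = "crossing set"

definition ends :: "diagram \<Rightarrow> real set" where
  "ends G = (\<Union>c\<in>G. {fst c, fst (snd c)})"

definition wf_diagram :: "diagram \<Rightarrow> bool" where
  "wf_diagram G \<longleftrightarrow> finite G \<and> (\<forall>c\<in>G. fst c < fst (snd c)) \<and>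
     (\<forall>c\<in>G. \<forall>c'\<in>G. c \<noteq> c' \<longrightarrow> {fst c, fst (snd c)} \<inter> {fst c', fst (snd c')} = {})"

fun is_chord :: "kind \<Rightarrow> bool" where
  "is_chord (Chord _) = True"
| "is_chord (Arrow _ _) = False"

definition chords :: "diagram \<Rightarrow> diagram" where
  "chords G = {c\<in>G. is_chord (snd (snd c))}"

definition classical :: "diagram \<Rightarrow> bool" where
  "classical G \<longleftrightarrow> chords G = {}"

definition isotopic :: "diagram \<Rightarrow> diagram \<Rightarrow> bool" where
  "isotopic G H \<longleftrightarrow> (\<exists>f::real \<Rightarrow> real. strict_mono f \<and> surj f \<and>
      H = (\<lambda>(x, y, k). (f x, f y, k)) ` G)"

definition omega1 :: "diagram \<Rightarrow> diagram \<Rightarrow> bool" where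
  "omega1 G H \<longleftrightarrow> (\<exists>x y r s. x < y \<and> ends G \<inter> {x..y} = {} \<and>
      H = insert (x, y, Arrow r s) G)"

definition omega2 :: "diagram \<Rightarrow> diagram \<Rightarrow> bool" where
  "omega2 G H \<longleftrightarrow> (\<exists>a1 a2 b1 b2 r s. a1 < a2 \<and> a2 < min b1 b2 \<and> b1 \<noteq> b2 \<and>
      ends G \<inter> {a1..a2} = {} \<and> ends G \<inter> {min b1 b2..max b1 b2} = {} \<and>
      H = G \<union> {(a1, b1, Arrow r s), (a2, b2, Arrow r (\<not> s))})"

text \<open>Omega 3.  Three strands pass through the intervals [u1,v1] < [u2,v2] < [u3,v3]
(strands 0, 1, 2).  The arrows join strands 01, 02, 12, with directions r01, r02, r12
(True = pointing right) and signs e01, e02, e12.  The order bits say: o0 -- in the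
first interval the endpoint of arrow 01 comes first; o1 -- in the second interval the
endpoint of arrow 01 comes first; o2 -- in the third interval the endpoint of arrow 02
comes first.  The side
conditions (acyclicity of directions = existence of top/middle/bottom strand, and the
sign relations) characterise exactly the configurations realised by three oriented
straight strands in the plane.\<close>

definition tri :: "real \<Rightarrow> real \<Rightarrow> real \<Rightarrow> real \<Rightarrow> real \<Rightarrow> real \<Rightarrow> bool \<Rightarrow> bool \<Rightarrow> bool \<Rightarrow>
    bool \<Rightarrow> bool \<Rightarrow> bool \<Rightarrow> bool \<Rightarrow> bool \<Rightarrow> bool \<Rightarrow> diagram" where
  "tri u1 v1 u2 v2 u3 v3 o0 o1 o2 r01 r02 r12 e01 e02 e12 =
     {(if o0 then u1 else v1, if o1 then u2 else v2, Arrow r01 e01),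
      (if o0 then v1 else u1, if o2 then u3 else v3, Arrow r02 e02),
      (if o1 then v2 else u2, if o2 then v3 else u3, Arrow r12 e12)}"

definition omega3 :: "diagram \<Rightarrow> diagram \<Rightarrow> bool" where
  "omega3 G1 G2 \<longleftrightarrow> (\<exists>G u1 v1 u2 v2 u3 v3 o0 o1 o2 r01 r02 r12 e01 e02 e12.
      u1 < v1 \<and> v1 < u2 \<and> u2 < v2 \<and> v2 < u3 \<and> u3 < v3 \<and>
      ends G \<inter> ({u1..v1} \<union> {u2..v2} \<union> {u3..v3}) = {} \<and>
      \<not> (r01 = r12 \<and> r02 \<noteq> r01) \<and>
      (e01 \<noteq> e02) = ((o1 \<noteq> o2) \<noteq> (r01 \<noteq> r02)) \<and>
      (e02 \<noteq> e12) = ((o0 \<noteq> o1) \<noteq> (r02 \<noteq> r12)) \<and>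
      G1 = G \<union> tri u1 v1 u2 v2 u3 v3 o0 o1 o2 r01 r02 r12 e01 e02 e12 \<and>
      G2 = G \<union> tri u1 v1 u2 v2 u3 v3 (\<not> o0) (\<not> o1) (\<not> o2) r01 r02 r12 e01 e02 e12)"

definition kstep :: "diagram \<Rightarrow> diagram \<Rightarrow> bool" where
  "kstep G H \<longleftrightarrow> wf_diagram G \<and> wf_diagram H \<and> classical G \<and> classical H \<and>
     (isotopic G H \<or> omega1 G H \<or> omega1 H G \<or> omega2 G H \<or> omega2 H G \<or> omega3 G H)"

definition kequiv :: "diagram \<Rightarrow> diagram \<Rightarrow> bool" where
  "kequiv = (\<lambda>G H. kstep G H \<or> kstep H G)\<^sup>*\<^sup>*"

text \<open>The long virtual knot represented by a classical diagram (an element of the set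
of knots \<open>\<K>\<close>, realised as an equivalence class of Gauss diagrams).\<close>
definition knot_class :: "diagram \<Rightarrow> diagram set" where
  "knot_class G = {H. kequiv G H}"

text \<open>\<open>\<int>[\<K>]\<close> is realised as finitely supported integer functions on classes.\<close>
type_synonym zknot = "diagram set \<Rightarrow>\<^sub>0 int"

definition knot :: "diagram \<Rightarrow> zknot" where
  "knot G = Poly_Mapping.single (knot_class G) 1"

fun res_pos :: "crossing \<Rightarrow> crossing" where
  "res_pos (x, y, Chord d) = (x, y, Arrow d True)"
| "res_pos c = c"

fun res_neg :: "crossing \<Rightarrow> crossing" where
  "res_neg (x, y, Chord d) = (x, y, Arrow (\<not> d) False)"
| "res_neg c = c"

text \<open>A diagram with singular crossings as an element of \<open>\<int>[\<K>]\<close>, via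
\<open>K\<^sub>\<times> = K\<^sub>+ - K\<^sub>-\<close> at each singular crossing.\<close>
definition resolve :: "diagram \<Rightarrow> zknot" where
  "resolve K = (\<Sum>S\<in>Pow (chords K).
      Poly_Mapping.single
        (knot_class ((K - chords K) \<union> res_pos ` S \<union> res_neg ` (chords K - S)))
        ((-1) ^ card (chords K - S)))"

section \<open>Discrete derivatives on \<open>\<int>\<^sup>m\<close> (points are functions nat => int; only
coordinates below m are relevant)\<close>

definition dplus :: "nat \<Rightarrow> ((nat \<Rightarrow> int) \<Rightarrow> 'v::ab_group_add) \<Rightarrow> (nat \<Rightarrow> int) \<Rightarrow> 'v" where
  "dplus i F = (\<lambda>z. F (z(i := z i + 1)) - F z)"

definition dminus :: "nat \<Rightarrow> ((nat \<Rightarrow> int) \<Rightarrow> 'v::ab_group_add) \<Rightarrow> (nat \<Rightarrow> int) \<Rightarrow> 'v" where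
  "dminus i F = (\<lambda>z. F z - F (z(i := z i - 1)))"

text \<open>\<open>\<partial>\<^sub>i\<^sup>\<plusminus>a\<close>: sign True means +, False means -.\<close>
definition dpow :: "nat \<Rightarrow> bool \<Rightarrow> nat \<Rightarrow> ((nat \<Rightarrow> int) \<Rightarrow> 'v::ab_group_add) \<Rightarrow> (nat \<Rightarrow> int) \<Rightarrow> 'v" where
  "dpow i s a = (if s then dplus i else dminus i) ^^ a"

definition dmulti :: "nat \<Rightarrow> (nat \<Rightarrow> bool) \<Rightarrow> (nat \<Rightarrow> nat) \<Rightarrow>
    ((nat \<Rightarrow> int) \<Rightarrow> 'v::ab_group_add) \<Rightarrow> (nat \<Rightarrow> int) \<Rightarrow> 'v" where
  "dmulti m \<nu> \<alpha> F = foldr (\<lambda>i G. dpow i (\<nu> i) (\<alpha> i) G) [0..<m] F"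

definition open_interval :: "real set \<Rightarrow> bool" where
  "open_interval A \<longleftrightarrow> open A \<and> is_interval A \<and> A \<noteq> {}"

text \<open>The k-th configuration of a regular twist sequence of type O/E (isodd = True for O),
Y (ybig = True for B, False for S), Z (zright = True for R, False for L) in (A, A').
Arrows are indexed from 0, so arrow 1 of the paper is index 0.\<close>
definition twist_config :: "bool \<Rightarrow> bool \<Rightarrow> bool \<Rightarrow> real set \<Rightarrow> real set \<Rightarrow> int \<Rightarrow> diagram \<Rightarrow> bool" where
  "twist_config isodd ybig zright A A' k C \<longleftrightarrow>
     (let p = nat (if isodd then \<bar>2 * k - 1\<bar> else \<bar>2 * k\<bar>) in
      \<exists>a b :: nat \<Rightarrow> real.
        strict_mono_on {..<p} a \<and> strict_mono_on {..<p} b \<and>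
        a ` {..<p} \<subseteq> A \<and> b ` {..<p} \<subseteq> A' \<and>
        C = (\<lambda>i. (a i, b (if ybig then p - 1 - i else i),
                   Arrow ((zright = (k \<ge> 1)) = even i) (k \<ge> 1))) ` {..<p})"

definition twist_lattice :: "nat \<Rightarrow> ((nat \<Rightarrow> int) \<Rightarrow> diagram set) \<Rightarrow> bool" where
  "twist_lattice m \<Phi> \<longleftrightarrow>
     (\<exists>G (A :: nat \<Rightarrow> real set) (A' :: nat \<Rightarrow> real set) isodd ybig zright
        (conf :: nat \<Rightarrow> int \<Rightarrow> diagram).
       wf_diagram G \<and> classical G \<and>
       (\<forall>i<m. open_interval (A i) \<and> open_interval (A' i) \<and>
              (\<forall>x\<in>A i. \<forall>y\<in>A' i. x < y) \<and> ends G \<inter> (A i \<union> A' i) = {}) \<and>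
       (\<forall>i<m. \<forall>j<m. i \<noteq> j \<longrightarrow> (A i \<union> A' i) \<inter> (A j \<union> A' j) = {}) \<and>
       (\<forall>i<m. \<forall>k. twist_config (isodd i) (ybig i) (zright i) (A i) (A' i) k (conf i k)) \<and>
       (\<forall>z. \<Phi> z = knot_class (G \<union> (\<Union>i<m. conf i (z i)))))"

end

theory Submission
  imports Defs
begin

text \<open>Place, for every chord, the regular twist sequence of type OSZ (Z the direction of the
chord) in small balls around the chord's endpoints.  Its configurations at \<open>k = 1\<close> and
\<open>k = 0\<close> are the positive and the negative resolution of the chord, so the mixed forward
difference \<open>\<partial>\<^sub>1\<^sup>+ \<dots> \<partial>\<^sub>m\<^sup>+\<close> of the lattice at the origin, which by
inclusion-exclusion is the signed sum of the lattice over the vertices of the unit cube, is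
exactly the signed sum over all resolutions of \<open>K\<close>.\<close>

definition shift_on :: "(nat \<Rightarrow> int) \<Rightarrow> nat set \<Rightarrow> nat \<Rightarrow> int" where
  "shift_on z S = (\<lambda>i. if i \<in> S then z i + 1 else z i)"

lemma sum_Pow_insert:
  assumes "finite A" and "a \<notin> A"
  shows "(\<Sum>S\<in>Pow (insert a A). f S) = (\<Sum>S\<in>Pow A. f S) + (\<Sum>S\<in>Pow A. f (insert a S))"
proof -
  have "inj_on (insert a) (Pow A)"
    using assms(2) by (auto simp: inj_on_def)
  moreover have "Pow A \<inter> insert a ` Pow A = {}"
    using assms(2) by auto
  ultimately show ?thesis
    using assms(1) by (simp add: Pow_insert sum.union_disjoint sum.reindex)
qed

lemma dmulti_forward_ones:
  "dmulti m (\<lambda>_. True) (\<lambda>_. 1) (F :: _ \<Rightarrow> 'v::ab_group_add) z =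
     (\<Sum>S\<in>Pow {..<m}. if even (card ({..<m} - S)) then F (shift_on z S) else - F (shift_on z S))"
proof (induction m arbitrary: F)
  case 0
  then show ?case by (simp add: dmulti_def shift_on_def)
next
  case (Suc m)
  have shift_Suc: "(shift_on z S)(m := shift_on z S m + 1) = shift_on z (insert m S)"
    if "S \<subseteq> {..<m}" for S
    using that by (auto simp: shift_on_def fun_eq_iff)
  have card_Suc: "card ({..<Suc m} - S) = Suc (card ({..<m} - S))"
    and card_insert: "card ({..<Suc m} - insert m S) = card ({..<m} - S)"
    if "S \<subseteq> {..<m}" for S
  proof -
    have "{..<Suc m} - S = insert m ({..<m} - S)" "{..<Suc m} - insert m S = {..<m} - S"
      using that by auto
    then show "card ({..<Suc m} - S) = Suc (card ({..<m} - S))"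
      "card ({..<Suc m} - insert m S) = card ({..<m} - S)" by simp_all
  qed
  let ?G = "\<lambda>S. if even (card ({..<Suc m} - S)) then F (shift_on z S) else - F (shift_on z S)"
  have "dmulti (Suc m) (\<lambda>_. True) (\<lambda>_. 1) F z = dmulti m (\<lambda>_. True) (\<lambda>_. 1) (dplus m F) z"
    by (simp add: dmulti_def dpow_def)
  also have "\<dots> = (\<Sum>S\<in>Pow {..<m}. if even (card ({..<m} - S))
      then dplus m F (shift_on z S) else - dplus m F (shift_on z S))"
    by (rule Suc.IH)
  also have "\<dots> = (\<Sum>S\<in>Pow {..<m}. ?G S) + (\<Sum>S\<in>Pow {..<m}. ?G (insert m S))"
    unfolding sum.distrib[symmetric]
    by (rule sum.cong) (simp_all add: dplus_def shift_Suc card_Suc card_insert)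
  also have "\<dots> = (\<Sum>S\<in>Pow {..<Suc m}. ?G S)"
    by (rule sum_Pow_insert[of "{..<m}" m, folded lessThan_Suc, symmetric]) simp_all
  finally show ?case .
qed

lemma single_alternating:
  "(if even n then Poly_Mapping.single k (1::int) else - Poly_Mapping.single k 1)
     = Poly_Mapping.single k ((-1) ^ n)"
  by (simp add: single_uminus)

lemma twist_config_exists:
  assumes "open A" "open A'" "a \<in> A" "b \<in> A'"
  shows "\<exists>C. twist_config isodd ybig zright A A' k C"
proof -
  obtain \<epsilon> where \<epsilon>: "\<epsilon> > 0" "ball a \<epsilon> \<subseteq> A" "ball b \<epsilon> \<subseteq> A'"
  proof -
    obtain \<epsilon>1 \<epsilon>2 where "\<epsilon>1 > 0" "ball a \<epsilon>1 \<subseteq> A" "\<epsilon>2 > 0" "ball b \<epsilon>2 \<subseteq> A'"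
      using assms by (meson open_contains_ball)
    then show ?thesis
      by (intro that[of "min \<epsilon>1 \<epsilon>2"]) auto
  qed
  define f where "f j = \<epsilon> * (real j / real (Suc j))" for j
  have "strict_mono f"
    using \<epsilon>(1) by (intro strict_monoI) (simp add: f_def field_simps)
  then have mono: "strict_mono_on P (\<lambda>j. t + f j)" for P t
    by (simp add: strict_mono_on_def strict_mono_def)
  have "0 \<le> f j" "f j < \<epsilon>" for j
    using \<epsilon>(1) mult_strict_left_mono[of "real j / real (Suc j)" 1 \<epsilon>] by (simp_all add: f_def)
  then have "(\<lambda>j. t + f j) ` P \<subseteq> ball t \<epsilon>" for P t
    by (auto simp: dist_real_def)
  then have images: "(\<lambda>j. a + f j) ` P \<subseteq> A" "(\<lambda>j. b + f j) ` P \<subseteq> A'" for P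
    using \<epsilon> by blast+
  show ?thesis
    unfolding twist_config_def Let_def
    by (rule exI, rule exI[of _ "\<lambda>j. a + f j"], rule exI[of _ "\<lambda>j. b + f j"])
      (intro conjI mono images, rule refl)
qed

lemma twist_config_OS_one:
  "x \<in> A \<Longrightarrow> y \<in> A' \<Longrightarrow> twist_config True False d A A' 1 {(x, y, Arrow d True)}"
  unfolding twist_config_def Let_def
  by (rule exI[of _ "\<lambda>_. x"], rule exI[of _ "\<lambda>_. y"]) (auto simp: lessThan_Suc strict_mono_on_def)

lemma twist_config_OS_zero:
  "x \<in> A \<Longrightarrow> y \<in> A' \<Longrightarrow> twist_config True False d A A' 0 {(x, y, Arrow (\<not> d) False)}"
  unfolding twist_config_def Let_def
  by (rule exI[of _ "\<lambda>_. x"], rule exI[of _ "\<lambda>_. y"]) (auto simp: lessThan_Suc strict_mono_on_def)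

lemma finite_imp_separated:
  fixes E :: "'a::heine_borel set"
  assumes "finite E"
  shows "\<exists>\<epsilon>>0. \<forall>p\<in>E. \<forall>q\<in>E. p \<noteq> q \<longrightarrow> 2 * \<epsilon> \<le> dist p q"
proof -
  obtain e where "e > 0" and e: "\<forall>p\<in>E. \<forall>q\<in>E. dist p q < e \<longrightarrow> p = q"
    using assms uniform_discrete_finite_iff unfolding uniform_discrete_def by blast
  have "\<forall>p\<in>E. \<forall>q\<in>E. p \<noteq> q \<longrightarrow> 2 * (e / 2) \<le> dist p q"
    using e by (auto intro: leI)
  with \<open>e > 0\<close> show ?thesis
    by (intro exI[of _ "e / 2"]) simp
qed

lemma finite_ends: "finite G \<Longrightarrow> finite (ends G)"
  by (simp add: ends_def)

lemma crossing_balls_disjoint: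
  assumes "wf_diagram G" and sep: "\<forall>p\<in>ends G. \<forall>q\<in>ends G. p \<noteq> q \<longrightarrow> 2 * \<epsilon> \<le> dist p q"
    and "e \<in> G" "e' \<in> G" "e \<noteq> e'"
  shows "(ball (fst e) \<epsilon> \<union> ball (fst (snd e)) \<epsilon>) \<inter> (ball (fst e') \<epsilon> \<union> ball (fst (snd e')) \<epsilon>) = {}"
proof -
  have "ball p \<epsilon> \<inter> ball q \<epsilon> = {}" if "p \<in> {fst e, fst (snd e)}" "q \<in> {fst e', fst (snd e')}" for p q
  proof (rule disjoint_ballI)
    have "p \<noteq> q"
      using assms(1,3-5) that unfolding wf_diagram_def by blast
    moreover have "p \<in> ends G" "q \<in> ends G"
      using assms(3,4) that unfolding ends_def by blast+
    ultimately show "\<epsilon> + \<epsilon> \<le> dist p q"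
      using sep by fastforce
  qed
  then show ?thesis
    by blast
qed

lemma crossing_balls_ordered:
  assumes "wf_diagram G" and sep: "\<forall>p\<in>ends G. \<forall>q\<in>ends G. p \<noteq> q \<longrightarrow> 2 * \<epsilon> \<le> dist p q"
    and "e \<in> G"
  shows "\<forall>u\<in>ball (fst e) \<epsilon>. \<forall>v\<in>ball (fst (snd e)) \<epsilon>. u < v"
proof -
  have "fst e < fst (snd e)" "fst e \<in> ends G" "fst (snd e) \<in> ends G"
    using assms(1,3) unfolding wf_diagram_def ends_def by auto
  then have "fst e + 2 * \<epsilon> \<le> fst (snd e)"
    using sep by (fastforce simp: dist_real_def)
  then show ?thesis
    by (auto simp: dist_real_def)
qed

lemma ends_avoid_crossing_balls:
  assumes "wf_diagram G" and sep: "\<forall>p\<in>ends G. \<forall>q\<in>ends G. p \<noteq> q \<longrightarrow> 2 * \<epsilon> \<le> dist p q"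
    and "\<epsilon> > 0" "e \<in> G"
  shows "ends (G - {e}) \<inter> (ball (fst e) \<epsilon> \<union> ball (fst (snd e)) \<epsilon>) = {}"
proof -
  have "q \<notin> ball (fst e) \<epsilon> \<union> ball (fst (snd e)) \<epsilon>"
    if "e' \<in> G - {e}" "q \<in> {fst e', fst (snd e')}" for e' q
  proof -
    have "q \<in> ball (fst e') \<epsilon> \<union> ball (fst (snd e')) \<epsilon>"
      using \<open>\<epsilon> > 0\<close> that(2) by auto
    then show ?thesis
      using crossing_balls_disjoint[OF assms(1) sep assms(4), of e'] that(1) by blast
  qed
  then show ?thesis
    unfolding ends_def by blast
qed

fun resolution_twist :: "crossing \<Rightarrow> real \<Rightarrow> int \<Rightarrow> diagram" where
  "resolution_twist (x, y, Chord d) \<epsilon> k =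
     (if k = 1 then {(x, y, Arrow d True)} else if k = 0 then {(x, y, Arrow (\<not> d) False)}
      else (SOME C. twist_config True False d (ball x \<epsilon>) (ball y \<epsilon>) k C))"
| "resolution_twist (x, y, Arrow r s) \<epsilon> k = {(x, y, Arrow r s)}"

lemma resolution_twist_one: "resolution_twist e \<epsilon> 1 = {res_pos e}"
  and resolution_twist_zero: "resolution_twist e \<epsilon> 0 = {res_neg e}"
  by (cases e rule: res_pos.cases; simp)+

lemma twist_config_resolution_twist:
  assumes "\<epsilon> > 0"
  shows "twist_config True False d (ball x \<epsilon>) (ball y \<epsilon>) k (resolution_twist (x, y, Chord d) \<epsilon> k)"
proof -
  have centres: "x \<in> ball x \<epsilon>" "y \<in> ball y \<epsilon>"
    using assms by simp_all
  consider "k = 1" | "k = 0" | "k \<noteq> 1" "k \<noteq> 0"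
    by blast
  then show ?thesis
  proof cases
    case 1
    then show ?thesis
      using twist_config_OS_one[OF centres] by simp
  next
    case 2
    then show ?thesis
      using twist_config_OS_zero[OF centres] by simp
  next
    case 3
    then have "resolution_twist (x, y, Chord d) \<epsilon> k =
        (SOME C. twist_config True False d (ball x \<epsilon>) (ball y \<epsilon>) k C)"
      by simp
    then show ?thesis
      by (simp only:) (rule someI_ex, rule twist_config_exists[OF open_ball open_ball centres])
  qed
qed

definition resolution_lattice :: "diagram \<Rightarrow> (nat \<Rightarrow> crossing) \<Rightarrow> real \<Rightarrow> (nat \<Rightarrow> int) \<Rightarrow> diagram set"
  where "resolution_lattice K c \<epsilon> z =
    knot_class ((K - chords K) \<union> (\<Union>i<card (chords K). resolution_twist (c i) \<epsilon> (z i)))"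

lemma chords_eq_Chord:
  assumes "e \<in> chords G"
  obtains x y d where "e = (x, y, Chord d)"
  using assms by (cases e rule: res_pos.cases) (auto simp: chords_def)

lemma twist_lattice_resolution_lattice:
  assumes K: "wf_diagram K" and c: "bij_betw c {..<card (chords K)} (chords K)"
    and "\<epsilon> > 0" and sep: "\<forall>p\<in>ends K. \<forall>q\<in>ends K. p \<noteq> q \<longrightarrow> 2 * \<epsilon> \<le> dist p q"
  shows "twist_lattice (card (chords K)) (resolution_lattice K c \<epsilon>)"
proof -
  let ?m = "card (chords K)"
  let ?G = "K - chords K"
  have cK: "c i \<in> chords K" "c i \<in> K" if "i < ?m" for i
    using c that by (auto simp: bij_betw_def chords_def)
  have "\<forall>i. \<exists>x y d. i < ?m \<longrightarrow> c i = (x, y, Chord d)"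
    using chords_eq_Chord[OF cK(1)] by metis
  then obtain x y d where c_eq: "c i = (x i, y i, Chord (d i))" if "i < ?m" for i
    by metis
  define A where "A i = ball (fst (c i)) \<epsilon>" for i
  define A' where "A' i = ball (fst (snd (c i))) \<epsilon>" for i
  have wfG: "wf_diagram ?G"
    using K unfolding wf_diagram_def by auto
  have classicalG: "classical ?G"
    unfolding classical_def chords_def by auto
  have intervals: "open_interval (A i)" "open_interval (A' i)" for i
    using \<open>\<epsilon> > 0\<close> by (auto simp: A_def A'_def open_interval_def is_interval_ball_real)
  have ordered: "\<forall>u\<in>A i. \<forall>v\<in>A' i. u < v" if "i < ?m" for i
    unfolding A_def A'_def by (rule crossing_balls_ordered[OF K sep cK(2)[OF that]])
  have avoids_G: "ends ?G \<inter> (A i \<union> A' i) = {}" if "i < ?m" for i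
  proof -
    have "ends ?G \<subseteq> ends (K - {c i})"
      using cK(1)[OF that] unfolding ends_def by blast
    then show ?thesis
      using ends_avoid_crossing_balls[OF K sep \<open>\<epsilon> > 0\<close> cK(2)[OF that]] unfolding A_def A'_def
      by blast
  qed
  have disjoint: "(A i \<union> A' i) \<inter> (A j \<union> A' j) = {}" if "i < ?m" "j < ?m" "i \<noteq> j" for i j
  proof -
    have "c i \<noteq> c j"
      using c that unfolding bij_betw_def inj_on_def by blast
    then show ?thesis
      unfolding A_def A'_def
      by (rule crossing_balls_disjoint[OF K sep cK(2)[OF that(1)] cK(2)[OF that(2)]])
  qed
  have configs: "twist_config True False (d i) (A i) (A' i) k (resolution_twist (c i) \<epsilon> k)"
    if "i < ?m" for i k
    using twist_config_resolution_twist[OF \<open>\<epsilon> > 0\<close>] c_eq[OF that] by (simp add: A_def A'_def)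
  show ?thesis
    unfolding twist_lattice_def
    by (rule exI[of _ ?G], rule exI[of _ A], rule exI[of _ A'], rule exI[of _ "\<lambda>_. True"],
        rule exI[of _ "\<lambda>_. False"], rule exI[of _ d], rule exI[of _ "\<lambda>i. resolution_twist (c i) \<epsilon>"])
      (simp add: wfG classicalG intervals ordered avoids_G disjoint configs resolution_lattice_def)
qed

lemma dmulti_resolution_lattice:
  assumes c: "bij_betw c {..<card (chords K)} (chords K)"
  shows "dmulti (card (chords K)) (\<lambda>_. True) (\<lambda>_. 1)
      (\<lambda>z. Poly_Mapping.single (resolution_lattice K c \<epsilon> z) (1::int)) (\<lambda>_. 0) = resolve K"
proof -
  let ?m = "card (chords K)"
  let ?R = "\<lambda>T. Poly_Mapping.single
      (knot_class ((K - chords K) \<union> res_pos ` T \<union> res_neg ` (chords K - T)))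
      ((-1 :: int) ^ card (chords K - T))"
  have vertex: "Poly_Mapping.single (resolution_lattice K c \<epsilon> (shift_on (\<lambda>_. 0) S))
      ((-1) ^ card ({..<?m} - S)) = ?R (c ` S)" if "S \<subseteq> {..<?m}" for S
  proof -
    have inj: "inj_on c {..<?m}"
      using c by (rule bij_betw_imp_inj_on)
    have compl: "chords K - c ` S = c ` ({..<?m} - S)"
      using inj_on_image_set_diff[OF inj Diff_subset that] bij_betw_imp_surj_on[OF c] by simp
    have "card (c ` ({..<?m} - S)) = card ({..<?m} - S)"
      by (rule card_image[OF inj_on_subset[OF inj Diff_subset]])
    moreover have "resolution_twist (c i) \<epsilon> (shift_on (\<lambda>_. 0) S i)
        = (if i \<in> S then {res_pos (c i)} else {res_neg (c i)})" for i
      by (simp add: shift_on_def resolution_twist_one resolution_twist_zero)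
    then have "(\<Union>i<?m. resolution_twist (c i) \<epsilon> (shift_on (\<lambda>_. 0) S i))
        = res_pos ` c ` S \<union> res_neg ` c ` ({..<?m} - S)"
      using that by auto
    ultimately show ?thesis
      by (simp add: resolution_lattice_def compl Un_assoc)
  qed
  have "dmulti ?m (\<lambda>_. True) (\<lambda>_. 1)
      (\<lambda>z. Poly_Mapping.single (resolution_lattice K c \<epsilon> z) (1::int)) (\<lambda>_. 0)
    = (\<Sum>S\<in>Pow {..<?m}. Poly_Mapping.single (resolution_lattice K c \<epsilon> (shift_on (\<lambda>_. 0) S))
        ((-1) ^ card ({..<?m} - S)))"
    unfolding dmulti_forward_ones single_alternating ..
  also have "\<dots> = (\<Sum>S\<in>Pow {..<?m}. ?R (c ` S))"
    by (rule sum.cong) (simp_all add: vertex)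
  also have "\<dots> = resolve K"
    unfolding resolve_def by (rule sum.reindex_bij_betw[OF bij_betw_Pow[OF c]])
  finally show ?thesis .
qed

theorem lemma5:
  fixes K :: diagram
  assumes "wf_diagram K" and "0 < card (chords K)"
  shows "\<exists>(\<Phi> :: (nat \<Rightarrow> int) \<Rightarrow> diagram set) (\<alpha> :: nat \<Rightarrow> nat) (\<nu> :: nat \<Rightarrow> bool).
           twist_lattice (card (chords K)) \<Phi> \<and>
           dmulti (card (chords K)) \<nu> \<alpha> (\<lambda>z. Poly_Mapping.single (\<Phi> z) (1::int)) (\<lambda>_. 0)
             = resolve K"
proof -
  have "finite K"
    using assms(1) by (simp add: wf_diagram_def)
  then obtain c where c: "bij_betw c {..<card (chords K)} (chords K)"
    using ex_bij_betw_nat_finite[of "chords K"] by (auto simp: chords_def atLeast0LessThan)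
  obtain \<epsilon> where "\<epsilon> > 0" "\<forall>p\<in>ends K. \<forall>q\<in>ends K. p \<noteq> q \<longrightarrow> 2 * \<epsilon> \<le> dist p q"
    using finite_imp_separated[OF finite_ends[OF \<open>finite K\<close>]] by blast
  then show ?thesis
    using twist_lattice_resolution_lattice[OF assms(1) c] dmulti_resolution_lattice[OF c]
    by (intro exI[of _ "resolution_lattice K c \<epsilon>"] exI[of _ "\<lambda>_. 1"] exI[of _ "\<lambda>_. True"]) simp
qed

end
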